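(* Let $(\mathcal{L},[\cdot,\cdot,\cdot]_{\mathcal{L}})$ be a (right) $3$-Leibniz algebra over a field $\mathbb{K}$. Then the linear map $R$ on $(\mathbb{K}\oplus(\mathcal{L}\otimes\mathcal{L}))^{\otimes 2}$ given by $R\big((a,x_1\otimes x_2)\otimes(b,y_1\otimes y_2)\big)=(b,y_1\otimes y_2)\otimes(a,x_1\otimes x_2)+(1,0)\otimes\big(0,[x_1,y_1,y_2]_{\mathcal{L}}\otimes x_2+x_1\otimes[x_2,y_1,y_2]_{\mathcal{L}}\big)$ (extended linearly in the $\mathcal{L}\otimes\mathcal{L}$ components) is a solution of the Yang-Baxter equation on $\mathbb{K}\oplus(\mathcal{L}\otimes\mathcal{L})$.
   Context: A (right) $3$-Leibniz algebra is a vector space $\mathcal{L}$ with a trilinear map $[\cdot,\cdot,\cdot]_{\mathcal{L}}$ such that $[[x_1,x_2,x_3]_{\mathcal{L}},y_1,y_2]_{\mathcal{L}}=[[x_1,y_1,y_2]_{\mathcal{L}},x_2,x_3]_{\mathcal{L}}+[x_1,[x_2,y_1,y_2]_{\mathcal{L}},x_3]_{\mathcal{L}}+[x_1,x_2,[x_3,y_1,y_2]_{\mathcal{L}}]_{\mathcal{L}}$. A solution of the Yang-Baxter equation on $V$ is an invertible linear $R:V\otimes V\to V\otimes V$ with $(R\otimes\mathrm{Id})(\mathrm{Id}\otimes R)(R\otimes\mathrm{Id})=(\mathrm{Id}\otimes R)(R\otimes\mathrm{Id})(\mathrm{Id}\otimes R)$. *)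

theory Defs
  imports Main
begin

text \<open>A vector space over a field 'k with basis indexed by a set S is modelled as
  the finitely supported coordinate functions supported in S.  Every vector
  space has a basis, so this is no loss of generality; tensor products of
  spaces with bases S and T have basis S \<times> T, and a direct sum has the
  disjoint union of the bases as basis.\<close>

definition fs_on :: "'i set \<Rightarrow> ('i \<Rightarrow> 'k::zero) set" where
  "fs_on S = {f. finite {i. f i \<noteq> 0} \<and> {i. f i \<noteq> 0} \<subseteq> S}"

text \<open>Linear extension of a map given on basis vectors: g i is the image of e_i.\<close>
definition lin_ext :: "('i \<Rightarrow> 'j \<Rightarrow> 'k::field) \<Rightarrow> ('i \<Rightarrow> 'k) \<Rightarrow> ('j \<Rightarrow> 'k)" where
  "lin_ext g f = (\<lambda>j. \<Sum>i\<in>{i. f i \<noteq> 0}. f i * g i j)"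

definition tri_ext :: "('b \<Rightarrow> 'b \<Rightarrow> 'b \<Rightarrow> 'b \<Rightarrow> 'k::field)
    \<Rightarrow> ('b \<Rightarrow> 'k) \<Rightarrow> ('b \<Rightarrow> 'k) \<Rightarrow> ('b \<Rightarrow> 'k) \<Rightarrow> ('b \<Rightarrow> 'k)" where
  "tri_ext br x y z = (\<lambda>d. \<Sum>a\<in>{a. x a \<noteq> 0}. \<Sum>b\<in>{b. y b \<noteq> 0}. \<Sum>c\<in>{c. z c \<noteq> 0}.
       x a * y b * z c * br a b c d)"

text \<open>(Right) 3-Leibniz algebra on L with basis B: br a b c is the coordinate vector of
  [e_a, e_b, e_c], and the extended trilinear bracket satisfies the 3-Leibniz identity.\<close>
definition leibniz3 :: "'b set \<Rightarrow> ('b \<Rightarrow> 'b \<Rightarrow> 'b \<Rightarrow> 'b \<Rightarrow> 'k::field) \<Rightarrow> bool" where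
  "leibniz3 B br \<longleftrightarrow>
     (\<forall>a\<in>B. \<forall>b\<in>B. \<forall>c\<in>B. br a b c \<in> fs_on B) \<and>
     (\<forall>x1\<in>fs_on B. \<forall>x2\<in>fs_on B. \<forall>x3\<in>fs_on B. \<forall>y1\<in>fs_on B. \<forall>y2\<in>fs_on B.
        tri_ext br (tri_ext br x1 x2 x3) y1 y2 =
          (\<lambda>d. tri_ext br (tri_ext br x1 y1 y2) x2 x3 d
              + tri_ext br x1 (tri_ext br x2 y1 y2) x3 d
              + tri_ext br x1 x2 (tri_ext br x3 y1 y2) d))"

text \<open>Basis of V = K \<oplus> (L \<otimes> L): None is (1,0), Some (a,b) is (0, e_a \<otimes> e_b).\<close>
definition Vbasis :: "'b set \<Rightarrow> ('b \<times> 'b) option set" where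
  "Vbasis B = insert None (Some ` (B \<times> B))"

definition kdelta :: "'a \<Rightarrow> 'a \<Rightarrow> 'k::field" where
  "kdelta x y = (if x = y then 1 else 0)"

text \<open>Images of basis vectors e_i \<otimes> e_j of V \<otimes> V under R:
  R((a,x)\<otimes>(b,y)) = (b,y)\<otimes>(a,x) + (1,0)\<otimes>(0,[x1,y1,y2]\<otimes>x2 + x1\<otimes>[x2,y1,y2]).\<close>
definition Rbasis :: "('b \<Rightarrow> 'b \<Rightarrow> 'b \<Rightarrow> 'b \<Rightarrow> 'k::field)
   \<Rightarrow> ('b \<times> 'b) option \<times> ('b \<times> 'b) option \<Rightarrow> ('b \<times> 'b) option \<times> ('b \<times> 'b) option \<Rightarrow> 'k" where
  "Rbasis br ij pq =
     kdelta (snd ij, fst ij) pq +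
     (case ij of
        (Some (x1, x2), Some (y1, y2)) \<Rightarrow>
          (case pq of
             (None, Some (c, d)) \<Rightarrow> br x1 y1 y2 c * kdelta d x2 + kdelta c x1 * br x2 y1 y2 d
           | _ \<Rightarrow> 0)
      | _ \<Rightarrow> 0)"

definition tensor_id_right :: "('i \<times> 'i \<Rightarrow> 'i \<times> 'i \<Rightarrow> 'k::field) \<Rightarrow> 'i \<times> 'i \<times> 'i \<Rightarrow> 'i \<times> 'i \<times> 'i \<Rightarrow> 'k" where
  "tensor_id_right g = (\<lambda>(p, q, r) (p', q', r'). g (p, q) (p', q') * kdelta r r')"

definition tensor_id_left :: "('i \<times> 'i \<Rightarrow> 'i \<times> 'i \<Rightarrow> 'k::field) \<Rightarrow> 'i \<times> 'i \<times> 'i \<Rightarrow> 'i \<times> 'i \<times> 'i \<Rightarrow> 'k" where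
  "tensor_id_left g = (\<lambda>(p, q, r) (p', q', r'). kdelta p p' * g (q, r) (q', r'))"

definition YBE_solution :: "'i set \<Rightarrow> ('i \<times> 'i \<Rightarrow> 'i \<times> 'i \<Rightarrow> 'k::field) \<Rightarrow> bool" where
  "YBE_solution I g \<longleftrightarrow>
     (\<forall>ij\<in>I \<times> I. g ij \<in> fs_on (I \<times> I)) \<and>
     bij_betw (lin_ext g) (fs_on (I \<times> I)) (fs_on (I \<times> I)) \<and>
     (\<forall>w\<in>fs_on (I \<times> I \<times> I).
        lin_ext (tensor_id_right g) (lin_ext (tensor_id_left g) (lin_ext (tensor_id_right g) w)) =
        lin_ext (tensor_id_left g) (lin_ext (tensor_id_right g) (lin_ext (tensor_id_left g) w)))"

end

theory Submission
  imports Defs "HOL-Library.Function_Algebras"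
begin

(* The theorem is an instance of a statement about any right Leibniz algebra A: on K \<oplus> A, with
  K central and all brackets in A, the map R(x \<otimes> y) = y \<otimes> x + 1 \<otimes> [x, y] solves the
  Yang-Baxter equation. On a pure tensor x \<otimes> y \<otimes> z both sides of the braid relation expand to
  the same terms, except that 1 \<otimes> 1 \<otimes> [[x, y], z] on one side meets
  1 \<otimes> 1 \<otimes> ([[x, z], y] + [x, [y, z]]) on the other, so the braid relation is the Leibniz
  identity. R is invertible because its correction term only sees the A \<otimes> A component of its
  argument and takes values in 1 \<otimes> A.
  L \<otimes> L with [x1 \<otimes> x2, y1 \<otimes> y2] = [x1, y1, y2] \<otimes> x2 + x1 \<otimes> [x2, y1, y2] is a right
  Leibniz algebra: its Leibniz identity is the 3-Leibniz identity applied in each factor. *)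

section \<open>Finitely supported coordinate vectors\<close>

abbreviation finsupp :: "('i \<Rightarrow> 'k::zero) \<Rightarrow> bool" where
  "finsupp f \<equiv> finite {i. f i \<noteq> 0}"

lemma sum_mult_kdelta:
  assumes "finite U" "{p. u p \<noteq> 0} \<subseteq> U"
  shows "(\<Sum>p\<in>U. u p * kdelta p p') = u p'"
proof -
  have "(\<Sum>p\<in>U. u p * kdelta p p') = (\<Sum>p\<in>U. if p = p' then u p else 0)"
    by (intro sum.cong) (auto simp: kdelta_def)
  also have "\<dots> = u p'"
    using assms by (auto simp: sum.delta')
  finally show ?thesis .
qed

lemma sum_mult_kdelta_mult:
  assumes "finite U" "{p. u p \<noteq> 0} \<subseteq> U"
  shows "(\<Sum>p\<in>U. u p * kdelta p p' * K p) = u p' * K p'"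
  using sum_mult_kdelta[of U "\<lambda>p. u p * K p" p'] assms by (auto simp: mult_ac)

lemma lin_ext_superset:
  assumes "finite S" "{i. f i \<noteq> 0} \<subseteq> S"
  shows "lin_ext g f j = (\<Sum>i\<in>S. f i * g i j)"
  unfolding lin_ext_def by (rule sum.mono_neutral_left) (use assms in auto)

lemma lin_ext_add:
  assumes "finsupp f1" "finsupp f2"
  shows "lin_ext g (f1 + f2) = lin_ext g f1 + lin_ext g f2"
proof
  fix j
  let ?S = "{i. f1 i \<noteq> 0} \<union> {i. f2 i \<noteq> 0}"
  have S: "finite ?S" using assms by auto
  have "lin_ext g (f1 + f2) j = (\<Sum>i\<in>?S. (f1 + f2) i * g i j)"
    by (rule lin_ext_superset[OF S]) auto
  also have "\<dots> = (\<Sum>i\<in>?S. f1 i * g i j) + (\<Sum>i\<in>?S. f2 i * g i j)"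
    by (simp add: distrib_right sum.distrib)
  also have "\<dots> = lin_ext g f1 j + lin_ext g f2 j"
    by (simp add: lin_ext_superset[OF S])
  finally show "lin_ext g (f1 + f2) j = (lin_ext g f1 + lin_ext g f2) j" by simp
qed

lemma lin_ext_zero [simp]: "lin_ext g 0 = 0"
  by (simp add: lin_ext_def fun_eq_iff)

lemma lin_ext_kdelta [simp]: "lin_ext g (kdelta i) = g i"
  by (simp add: lin_ext_def kdelta_def fun_eq_iff)

lemma lin_ext_map_add: "lin_ext (\<lambda>i. g1 i + g2 i) f = lin_ext g1 f + lin_ext g2 f"
  by (simp add: lin_ext_def fun_eq_iff distrib_left sum.distrib)

lemma lin_ext_cong:
  assumes "\<And>i. f i \<noteq> 0 \<Longrightarrow> g i = h i"
  shows "lin_ext g f = lin_ext h f"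
  unfolding lin_ext_def using assms by (intro ext sum.cong) auto

lemma lin_ext_kdelta_swap:
  assumes "finsupp F"
  shows "lin_ext (\<lambda>i. kdelta (prod.swap i)) F = F \<circ> prod.swap"
proof
  fix j
  have "lin_ext (\<lambda>i. kdelta (prod.swap i)) F j = (\<Sum>i\<in>{i. F i \<noteq> 0}. if i = prod.swap j then F i else 0)"
    unfolding lin_ext_def by (intro sum.cong) (auto simp: kdelta_def)
  also have "\<dots> = (F \<circ> prod.swap) j"
    using assms by (simp add: sum.delta')
  finally show "lin_ext (\<lambda>i. kdelta (prod.swap i)) F j = (F \<circ> prod.swap) j" .
qed

lemma lin_ext_reindex:
  assumes "inj h" "finsupp f" "\<And>i. i \<notin> range h \<Longrightarrow> g i = 0"
  shows "lin_ext g f = lin_ext (g \<circ> h) (f \<circ> h)"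
proof
  fix j
  let ?S = "{i. f i \<noteq> 0}"
  have "g i j = 0" if "i \<notin> range h" for i
    using assms(3)[OF that] by simp
  then have "lin_ext g f j = (\<Sum>i\<in>?S \<inter> range h. f i * g i j)"
    unfolding lin_ext_def using assms(2) by (intro sum.mono_neutral_right) auto
  also have "\<dots> = (\<Sum>i\<in>h ` {a. f (h a) \<noteq> 0}. f i * g i j)"
    by (rule sum.cong) auto
  also have "\<dots> = lin_ext (g \<circ> h) (f \<circ> h) j"
    using assms(1) by (simp add: lin_ext_def sum.reindex inj_on_def)
  finally show "lin_ext g f j = lin_ext (g \<circ> h) (f \<circ> h) j" .
qed

lemma supp_lin_ext:
  "{j. lin_ext g f j \<noteq> 0} \<subseteq> (\<Union>i\<in>{i. f i \<noteq> 0}. {j. g i j \<noteq> 0})"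
proof
  fix j assume "j \<in> {j. lin_ext g f j \<noteq> 0}"
  then obtain i where "f i \<noteq> 0" "f i * g i j \<noteq> 0"
    unfolding lin_ext_def by (auto elim: sum.not_neutral_contains_not_neutral)
  then show "j \<in> (\<Union>i\<in>{i. f i \<noteq> 0}. {j. g i j \<noteq> 0})" by auto
qed

lemma fs_onI: "finsupp f \<Longrightarrow> {i. f i \<noteq> 0} \<subseteq> S \<Longrightarrow> f \<in> fs_on S"
  by (simp add: fs_on_def)

lemma fs_on_finsupp: "f \<in> fs_on S \<Longrightarrow> finsupp f"
  by (simp add: fs_on_def)

lemma fs_on_supp: "f \<in> fs_on S \<Longrightarrow> f i \<noteq> 0 \<Longrightarrow> i \<in> S"
  by (auto simp add: fs_on_def)

lemma fs_on_lin_ext: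
  assumes "f \<in> fs_on S" "\<And>i. i \<in> S \<Longrightarrow> g i \<in> fs_on T"
  shows "lin_ext g f \<in> fs_on T"
proof (rule fs_onI)
  show "finsupp (lin_ext g f)"
    using assms by (intro finite_subset[OF supp_lin_ext]) (auto dest: fs_on_finsupp fs_on_supp)
  show "{i. lin_ext g f i \<noteq> 0} \<subseteq> T"
    using supp_lin_ext[of g f] assms by (auto dest: fs_on_supp)
qed

lemma finsupp_kdelta [simp]: "finsupp (kdelta i)"
  by (rule finite_subset[of _ "{i}"]) (auto simp: kdelta_def)

lemma fs_on_kdelta: "i \<in> S \<Longrightarrow> kdelta i \<in> fs_on S"
  by (auto simp: fs_on_def kdelta_def)

lemma finsupp_add: "finsupp f \<Longrightarrow> finsupp g \<Longrightarrow> finsupp ((f :: 'i \<Rightarrow> 'k::monoid_add) + g)"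
  by (rule finite_subset[of _ "{i. f i \<noteq> 0} \<union> {i. g i \<noteq> 0}"]) auto

lemma fs_on_add:
  fixes f g :: "'i \<Rightarrow> 'k::monoid_add"
  assumes "f \<in> fs_on S" "g \<in> fs_on S"
  shows "f + g \<in> fs_on S"
proof (rule fs_onI)
  show "finsupp (f + g)"
    using assms by (intro finsupp_add) (auto dest: fs_on_finsupp)
  have "{i. (f + g) i \<noteq> 0} \<subseteq> {i. f i \<noteq> 0} \<union> {i. g i \<noteq> 0}" by auto
  then show "{i. (f + g) i \<noteq> 0} \<subseteq> S"
    using assms by (auto dest: fs_on_supp)
qed

lemma fs_on_uminus: "(f :: 'i \<Rightarrow> 'k::group_add) \<in> fs_on S \<Longrightarrow> - f \<in> fs_on S"
  unfolding fs_on_def by simp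

lemma fs_on_diff:
  fixes f g :: "'i \<Rightarrow> 'k::group_add"
  assumes "f \<in> fs_on S" "g \<in> fs_on S"
  shows "f - g \<in> fs_on S"
  using fs_on_add[OF assms(1) fs_on_uminus[OF assms(2)]] by simp

lemma zero_fun_comp [simp]: "0 \<circ> f = 0"
  by (simp add: fun_eq_iff)

lemma plus_fun_comp: "(f + g) \<circ> h = (f \<circ> h) + (g \<circ> h)"
  by (simp add: fun_eq_iff)

lemma minus_fun_comp: "(f - g) \<circ> h = (f \<circ> h) - (g \<circ> h)"
  by (simp add: fun_eq_iff)

lemma finsupp_comp:
  assumes "inj h" "finsupp F"
  shows "finsupp (F \<circ> h)"
proof -
  have supp: "{x. (F \<circ> h) x \<noteq> 0} = h -` {i. F i \<noteq> 0}" by auto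
  show ?thesis
    unfolding supp using assms by (intro finite_vimageI)
qed

lemma fs_on_comp:
  assumes "inj h" "F \<in> fs_on S" "h -` S \<subseteq> T"
  shows "F \<circ> h \<in> fs_on T"
  using assms by (intro fs_onI finsupp_comp) (auto dest: fs_on_finsupp fs_on_supp)

lemma lin_ext_comp:
  assumes "f \<in> fs_on S" "\<And>i. i \<in> S \<Longrightarrow> g i \<in> fs_on T"
  shows "lin_ext h (lin_ext g f) = lin_ext (\<lambda>i. lin_ext h (g i)) f"
proof
  fix j
  let ?F = "{i. f i \<noteq> 0}"
  let ?K = "\<Union>i\<in>?F. {k. g i k \<noteq> 0}"
  have K: "finite ?K"
    using assms by (auto dest: fs_on_finsupp fs_on_supp)
  have "lin_ext h (lin_ext g f) j = (\<Sum>k\<in>?K. (\<Sum>i\<in>?F. f i * g i k) * h k j)"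
    using lin_ext_superset[OF K supp_lin_ext] by (simp add: lin_ext_def)
  also have "\<dots> = (\<Sum>i\<in>?F. f i * (\<Sum>k\<in>?K. g i k * h k j))"
    unfolding sum_distrib_right sum_distrib_left mult.assoc by (rule sum.swap)
  also have "\<dots> = (\<Sum>i\<in>?F. f i * lin_ext h (g i) j)"
    by (intro sum.cong refl arg_cong2[where f = "(*)"] lin_ext_superset[OF K, symmetric]) auto
  also have "\<dots> = lin_ext (\<lambda>i. lin_ext h (g i)) f j"
    by (simp add: lin_ext_def)
  finally show "lin_ext h (lin_ext g f) j = lin_ext (\<lambda>i. lin_ext h (g i)) f j" .
qed

lemma braid_relation_from_basis:
  assumes g: "\<And>i. i \<in> S \<Longrightarrow> g i \<in> fs_on S" and h: "\<And>i. i \<in> S \<Longrightarrow> h i \<in> fs_on S"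
    and basis: "\<And>i. i \<in> S \<Longrightarrow> lin_ext g (lin_ext h (g i)) = lin_ext h (lin_ext g (h i))"
    and w: "w \<in> fs_on S"
  shows "lin_ext g (lin_ext h (lin_ext g w)) = lin_ext h (lin_ext g (lin_ext h w))"
proof -
  have hg: "lin_ext h (g i) \<in> fs_on S" if "i \<in> S" for i
    using g[OF that] h by (rule fs_on_lin_ext)
  have gh: "lin_ext g (h i) \<in> fs_on S" if "i \<in> S" for i
    using h[OF that] g by (rule fs_on_lin_ext)
  have "lin_ext g (lin_ext h (lin_ext g w)) = lin_ext g (lin_ext (\<lambda>i. lin_ext h (g i)) w)"
    using lin_ext_comp[where g = g and h = h, OF w g] by simp
  also have "\<dots> = lin_ext (\<lambda>i. lin_ext g (lin_ext h (g i))) w"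
    by (rule lin_ext_comp[where g = "\<lambda>i. lin_ext h (g i)", OF w hg])
  also have "\<dots> = lin_ext (\<lambda>i. lin_ext h (lin_ext g (h i))) w"
    using w basis by (intro lin_ext_cong) (auto dest: fs_on_supp)
  also have "\<dots> = lin_ext h (lin_ext (\<lambda>i. lin_ext g (h i)) w)"
    by (rule lin_ext_comp[where g = "\<lambda>i. lin_ext g (h i)", OF w gh, symmetric])
  also have "\<dots> = lin_ext h (lin_ext g (lin_ext h w))"
    using lin_ext_comp[where g = h and h = g, OF w h] by simp
  finally show ?thesis .
qed

section \<open>Tensor products of coordinate vectors\<close>

definition tensor :: "('i \<Rightarrow> 'k::comm_ring_1) \<Rightarrow> ('j \<Rightarrow> 'k) \<Rightarrow> 'i \<times> 'j \<Rightarrow> 'k" where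
  "tensor u v = (\<lambda>(p, q). u p * v q)"

lemma tensor_apply [simp]: "tensor u v (p, q) = u p * v q"
  by (simp add: tensor_def)

lemma tensor_add_left: "tensor (u1 + u2) v = tensor u1 v + tensor u2 v"
  by (simp add: tensor_def fun_eq_iff distrib_right)

lemma tensor_add_right: "tensor u (v1 + v2) = tensor u v1 + tensor u v2"
  by (simp add: tensor_def fun_eq_iff distrib_left)

lemma tensor_zero [simp]: "tensor 0 v = 0" "tensor u 0 = 0"
  by (simp_all add: tensor_def fun_eq_iff)

lemma tensor_kdelta: "tensor (kdelta p) (kdelta q) = kdelta (p, q)"
  by (auto simp: kdelta_def fun_eq_iff)

lemma tensor_comp_swap [simp]: "tensor u v \<circ> prod.swap = tensor v u"
  by (auto simp: fun_eq_iff)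

lemma tensor_comp_map_prod [simp]: "tensor u v \<circ> map_prod f g = tensor (u \<circ> f) (v \<circ> g)"
  by (auto simp: fun_eq_iff)

lemma supp_tensor: "{x. tensor u v x \<noteq> 0} \<subseteq> {p. u p \<noteq> 0} \<times> {q. v q \<noteq> 0}"
  by auto

lemma finsupp_tensor: "finsupp u \<Longrightarrow> finsupp v \<Longrightarrow> finsupp (tensor u v)"
  by (rule finite_subset[OF supp_tensor]) simp

lemma fs_on_tensor: "u \<in> fs_on S \<Longrightarrow> v \<in> fs_on T \<Longrightarrow> tensor u v \<in> fs_on (S \<times> T)"
  using supp_tensor[of u v]
  by (intro fs_onI finsupp_tensor) (auto dest: fs_on_finsupp fs_on_supp)

lemma lin_ext_tensor:
  assumes "finite U" "{p. u p \<noteq> 0} \<subseteq> U" "finite V" "{q. v q \<noteq> 0} \<subseteq> V"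
  shows "lin_ext g (tensor u v) j = (\<Sum>p\<in>U. \<Sum>q\<in>V. u p * v q * g (p, q) j)"
  using assms supp_tensor[of u v]
  by (subst lin_ext_superset[of "U \<times> V"]) (auto simp: sum.cartesian_product')

lemma lin_ext_tensor_map: "lin_ext (\<lambda>i. tensor u (g i)) f = tensor u (lin_ext g f)"
  by (simp add: lin_ext_def fun_eq_iff sum_distrib_left mult_ac)

lemma lin_ext_tensor_id_left:
  assumes "finsupp u" "finsupp F"
  shows "lin_ext (tensor_id_left g) (tensor u F) = tensor u (lin_ext g F)"
proof (intro ext, clarify)
  fix p' q' r'
  let ?U = "{p. u p \<noteq> 0}" and ?F = "{x. F x \<noteq> 0}"
  have "lin_ext (tensor_id_left g) (tensor u F) (p', q', r') =
      (\<Sum>p\<in>?U. u p * kdelta p p') * (\<Sum>x\<in>?F. F x * g x (q', r'))"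
    using assms
    by (simp add: lin_ext_tensor tensor_id_left_def split_def sum_product mult_ac)
  also have "\<dots> = u p' * lin_ext g F (q', r')"
    using assms by (simp add: sum_mult_kdelta lin_ext_def)
  finally show "lin_ext (tensor_id_left g) (tensor u F) (p', q', r') = tensor u (lin_ext g F) (p', q', r')"
    by simp
qed

lemma lin_ext_tensor_id_right:
  assumes "finsupp u" "finsupp v" "finsupp w"
  shows "lin_ext (tensor_id_right g) (tensor u (tensor v w)) =
    (\<lambda>(p, q, r). lin_ext g (tensor u v) (p, q) * w r)"
proof (intro ext, clarify)
  fix p' q' r'
  let ?U = "{p. u p \<noteq> 0}" and ?V = "{q. v q \<noteq> 0}" and ?W = "{r. w r \<noteq> 0}"
  have "lin_ext (tensor_id_right g) (tensor u (tensor v w)) (p', q', r') =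
      (\<Sum>p\<in>?U. \<Sum>q\<in>?V. u p * v q * g (p, q) (p', q')) * (\<Sum>r\<in>?W. w r * kdelta r r')"
    using assms finsupp_tensor[of v w] supp_tensor[of v w]
    by (simp add: lin_ext_tensor[of ?U _ "?V \<times> ?W"] tensor_id_right_def sum.cartesian_product'
        sum_distrib_left sum_distrib_right mult_ac)
  also have "\<dots> = lin_ext g (tensor u v) (p', q') * w r'"
    using assms by (simp add: lin_ext_tensor sum_mult_kdelta)
  finally show "lin_ext (tensor_id_right g) (tensor u (tensor v w)) (p', q', r') =
      lin_ext g (tensor u v) (p', q') * w r'" .
qed

lemma fs_on_tensor_id_left:
  assumes "\<And>ij. ij \<in> S \<times> S \<Longrightarrow> g ij \<in> fs_on (S \<times> S)" "i \<in> S \<times> S \<times> S"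
  shows "tensor_id_left g i \<in> fs_on (S \<times> S \<times> S)"
proof -
  obtain p q r where i: "i = (p, q, r)" by (cases i)
  have "tensor_id_left g i = tensor (kdelta p) (g (q, r))"
    by (auto simp: i tensor_id_left_def fun_eq_iff)
  then show ?thesis
    using assms by (auto simp: i intro: fs_on_tensor fs_on_kdelta)
qed

lemma fs_on_tensor_id_right:
  assumes "\<And>ij. ij \<in> S \<times> S \<Longrightarrow> g ij \<in> fs_on (S \<times> S)" "i \<in> S \<times> S \<times> S"
  shows "tensor_id_right g i \<in> fs_on (S \<times> S \<times> S)"
proof -
  obtain p q r where i: "i = (p, q, r)" by (cases i)
  have g: "g (p, q) \<in> fs_on (S \<times> S)" and r: "r \<in> S"
    using assms by (auto simp: i)
  have supp: "{x. tensor_id_right g i x \<noteq> 0} \<subseteq> (\<lambda>(a, b). (a, b, r)) ` {x. g (p, q) x \<noteq> 0}"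
    by (auto simp: i tensor_id_right_def kdelta_def image_iff split: if_splits)
  show ?thesis
  proof (rule fs_onI)
    show "finsupp (tensor_id_right g i)"
      using g by (intro finite_subset[OF supp]) (auto dest: fs_on_finsupp)
    show "{x. tensor_id_right g i x \<noteq> 0} \<subseteq> S \<times> S \<times> S"
      using supp g r by (auto dest: fs_on_supp)
  qed
qed

section \<open>The unital braiding of a right Leibniz algebra\<close>

definition bracket ::
    "('j \<Rightarrow> 'j \<Rightarrow> 'j \<Rightarrow> 'k::field) \<Rightarrow> ('j \<Rightarrow> 'k) \<Rightarrow> ('j \<Rightarrow> 'k) \<Rightarrow> 'j \<Rightarrow> 'k" where
  "bracket m u v = lin_ext (case_prod m) (tensor u v)"

text \<open>Structure constants m a b = [e_a, e_b] of a right Leibniz algebra with basis J. The identity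
  [[x, y], z] = [[x, z], y] + [x, [y, z]] is imposed on basis vectors only; by bilinearity this
  is equivalent to it holding on all vectors.\<close>
definition right_leibniz :: "'j set \<Rightarrow> ('j \<Rightarrow> 'j \<Rightarrow> 'j \<Rightarrow> 'k::field) \<Rightarrow> bool" where
  "right_leibniz J m \<longleftrightarrow> (\<forall>a\<in>J. \<forall>b\<in>J. m a b \<in> fs_on J) \<and>
     (\<forall>a\<in>J. \<forall>b\<in>J. \<forall>c\<in>J.
        bracket m (bracket m (kdelta a) (kdelta b)) (kdelta c) =
        bracket m (bracket m (kdelta a) (kdelta c)) (kdelta b) +
        bracket m (kdelta a) (bracket m (kdelta b) (kdelta c)))"

lemma bracket_kdelta [simp]: "bracket m (kdelta a) (kdelta b) = m a b"
  by (simp add: bracket_def tensor_kdelta)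

lemma bracket_zero [simp]: "bracket m 0 v = 0" "bracket m u 0 = 0"
  by (simp_all add: bracket_def)

lemma bracket_add_left:
  "finsupp u1 \<Longrightarrow> finsupp u2 \<Longrightarrow> finsupp v \<Longrightarrow> bracket m (u1 + u2) v = bracket m u1 v + bracket m u2 v"
  by (simp add: bracket_def tensor_add_left lin_ext_add finsupp_tensor)

lemma bracket_add_right:
  "finsupp u \<Longrightarrow> finsupp v1 \<Longrightarrow> finsupp v2 \<Longrightarrow> bracket m u (v1 + v2) = bracket m u v1 + bracket m u v2"
  by (simp add: bracket_def tensor_add_right lin_ext_add finsupp_tensor)

lemma fs_on_bracket:
  assumes "\<forall>a\<in>J. \<forall>b\<in>J. m a b \<in> fs_on J" "u \<in> fs_on J" "v \<in> fs_on J"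
  shows "bracket m u v \<in> fs_on J"
  unfolding bracket_def using assms by (intro fs_on_lin_ext[OF fs_on_tensor]) auto

definition embed_some :: "('j \<Rightarrow> 'k::zero) \<Rightarrow> 'j option \<Rightarrow> 'k" where
  "embed_some u = case_option 0 u"

lemma embed_comp_Some [simp]: "embed_some u \<circ> Some = u"
  by (simp add: embed_some_def fun_eq_iff)

lemma embed_some_zero [simp]: "embed_some 0 = 0"
  by (simp add: embed_some_def fun_eq_iff split: option.split)

lemma embed_some_add: "embed_some ((u :: 'j \<Rightarrow> 'k::monoid_add) + v) = embed_some u + embed_some v"
  by (simp add: embed_some_def fun_eq_iff split: option.split)

lemma lin_ext_embed_some_map: "lin_ext (\<lambda>i. embed_some (g i)) f = embed_some (lin_ext g f)"
  by (simp add: lin_ext_def embed_some_def fun_eq_iff split: option.split)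

lemma kdelta_comp_Some [simp]: "kdelta None \<circ> Some = 0" "kdelta (Some a) \<circ> Some = kdelta a"
  by (simp_all add: kdelta_def fun_eq_iff)

definition unital_basis :: "'j set \<Rightarrow> 'j option set" where
  "unital_basis J = insert None (Some ` J)"

lemma None_in_unital_basis [simp]: "None \<in> unital_basis J"
  by (simp add: unital_basis_def)

lemma Some_in_unital_basis [simp]: "Some a \<in> unital_basis J \<longleftrightarrow> a \<in> J"
  by (auto simp: unital_basis_def)

lemma fs_on_comp_Some: "u \<in> fs_on (unital_basis J) \<Longrightarrow> u \<circ> Some \<in> fs_on J"
  by (rule fs_on_comp) (auto simp: unital_basis_def)

lemma fs_on_embed_some: "u \<in> fs_on J \<Longrightarrow> embed_some u \<in> fs_on (unital_basis J)"
proof (rule fs_onI)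
  assume u: "u \<in> fs_on J"
  have supp: "{x. embed_some u x \<noteq> 0} = Some ` {a. u a \<noteq> 0}"
    by (auto simp: embed_some_def split: option.splits)
  show "finsupp (embed_some u)"
    using u by (simp add: supp fs_on_finsupp)
  show "{x. embed_some u x \<noteq> 0} \<subseteq> unital_basis J"
    using u by (auto simp: supp unital_basis_def dest: fs_on_supp)
qed

text \<open>The bracket of K \<oplus> A, where None indexes the unit 1 of K.\<close>
definition unital_bracket :: "('j \<Rightarrow> 'j \<Rightarrow> 'j \<Rightarrow> 'k::field)
    \<Rightarrow> ('j option \<Rightarrow> 'k) \<Rightarrow> ('j option \<Rightarrow> 'k) \<Rightarrow> 'j option \<Rightarrow> 'k" where
  "unital_bracket m u v = embed_some (bracket m (u \<circ> Some) (v \<circ> Some))"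

lemma unital_bracket_zero [simp]:
  "unital_bracket m (kdelta None) v = 0" "unital_bracket m u (kdelta None) = 0"
  "unital_bracket m 0 v = 0" "unital_bracket m u 0 = 0"
  by (simp_all add: unital_bracket_def)

lemma unital_bracket_add_left:
  assumes "finsupp u1" "finsupp u2" "finsupp v"
  shows "unital_bracket m (u1 + u2) v = unital_bracket m u1 v + unital_bracket m u2 v"
  using bracket_add_left[OF finsupp_comp[OF inj_Some assms(1)] finsupp_comp[OF inj_Some assms(2)]
      finsupp_comp[OF inj_Some assms(3)], of m]
  by (simp only: unital_bracket_def plus_fun_comp embed_some_add)

lemma unital_bracket_add_right:
  assumes "finsupp u" "finsupp v1" "finsupp v2"
  shows "unital_bracket m u (v1 + v2) = unital_bracket m u v1 + unital_bracket m u v2"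
  using bracket_add_right[OF finsupp_comp[OF inj_Some assms(1)] finsupp_comp[OF inj_Some assms(2)]
      finsupp_comp[OF inj_Some assms(3)], of m]
  by (simp only: unital_bracket_def plus_fun_comp embed_some_add)

lemma fs_on_unital_bracket:
  assumes "\<forall>a\<in>J. \<forall>b\<in>J. m a b \<in> fs_on J"
    "u \<in> fs_on (unital_basis J)" "v \<in> fs_on (unital_basis J)"
  shows "unital_bracket m u v \<in> fs_on (unital_basis J)"
  unfolding unital_bracket_def using assms by (intro fs_on_embed_some fs_on_bracket fs_on_comp_Some)

lemma unital_bracket_leibniz:
  assumes "right_leibniz J m" "p \<in> unital_basis J" "q \<in> unital_basis J"
    "r \<in> unital_basis J"
  shows "unital_bracket m (unital_bracket m (kdelta p) (kdelta q)) (kdelta r) =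
    unital_bracket m (unital_bracket m (kdelta p) (kdelta r)) (kdelta q) +
    unital_bracket m (kdelta p) (unital_bracket m (kdelta q) (kdelta r))"
proof (cases "p = None \<or> q = None \<or> r = None")
  case True
  then show ?thesis by auto
next
  case False
  then obtain a b c where abc: "p = Some a" "q = Some b" "r = Some c" "a \<in> J" "b \<in> J" "c \<in> J"
    using assms(2-4) by auto
  have "bracket m (bracket m (kdelta a) (kdelta b)) (kdelta c) =
      bracket m (bracket m (kdelta a) (kdelta c)) (kdelta b) +
      bracket m (kdelta a) (bracket m (kdelta b) (kdelta c))"
    using assms(1) abc unfolding right_leibniz_def by blast
  then show ?thesis
    by (simp add: abc unital_bracket_def embed_some_add)
qed

definition braiding :: "('j \<Rightarrow> 'j \<Rightarrow> 'j \<Rightarrow> 'k::field)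
    \<Rightarrow> 'j option \<times> 'j option \<Rightarrow> 'j option \<times> 'j option \<Rightarrow> 'k" where
  "braiding m = (\<lambda>(x, y). kdelta (y, x) +
     (case (x, y) of (Some a, Some b) \<Rightarrow> tensor (kdelta None) (embed_some (m a b)) | _ \<Rightarrow> 0))"

lemma lin_ext_braiding:
  fixes m :: "'j \<Rightarrow> 'j \<Rightarrow> 'j \<Rightarrow> 'k::field" and F :: "'j option \<times> 'j option \<Rightarrow> 'k"
  assumes "finsupp F"
  shows "lin_ext (braiding m) F =
    (F \<circ> prod.swap) +
    tensor (kdelta None) (embed_some (lin_ext (case_prod m) (F \<circ> map_prod Some Some)))"
proof -
  define c :: "'j option \<times> 'j option \<Rightarrow> 'j option \<times> 'j option \<Rightarrow> 'k" where
    "c = (\<lambda>(x, y). case (x, y) of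
       (Some a, Some b) \<Rightarrow> tensor (kdelta None) (embed_some (m a b)) | _ \<Rightarrow> 0)"
  have "braiding m = (\<lambda>i. kdelta (prod.swap i) + c i)"
    by (auto simp: braiding_def c_def)
  then have "lin_ext (braiding m) F = (F \<circ> prod.swap) + lin_ext c F"
    using assms by (simp add: lin_ext_map_add lin_ext_kdelta_swap)
  also have "lin_ext c F = lin_ext (c \<circ> map_prod Some Some) (F \<circ> map_prod Some Some)"
  proof (rule lin_ext_reindex)
    show "inj (map_prod Some Some)" by (auto simp: inj_def)
    show "c i = 0" if "i \<notin> range (map_prod Some Some)" for i
      using that by (cases i) (auto simp: c_def split: option.split)
  qed (rule assms)
  also have "c \<circ> map_prod Some Some = (\<lambda>i. tensor (kdelta None) (embed_some (case_prod m i)))"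
    by (auto simp: c_def fun_eq_iff)
  finally show ?thesis
    by (simp only: lin_ext_tensor_map lin_ext_embed_some_map)
qed

lemma lin_ext_braiding_tensor:
  assumes "finsupp u" "finsupp v"
  shows "lin_ext (braiding m) (tensor u v) = tensor v u + tensor (kdelta None) (unital_bracket m u v)"
  using assms by (simp add: lin_ext_braiding finsupp_tensor unital_bracket_def bracket_def)

lemma lin_ext_tensor_id_right_braiding:
  assumes "finsupp u" "finsupp v" "finsupp w"
  shows "lin_ext (tensor_id_right (braiding m)) (tensor u (tensor v w)) =
    tensor v (tensor u w) + tensor (kdelta None) (tensor (unital_bracket m u v) w)"
  using assms
  by (simp add: lin_ext_tensor_id_right lin_ext_braiding_tensor) (simp add: fun_eq_iff algebra_simps)

lemma lin_ext_tensor_id_left_braiding: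
  assumes "finsupp u" "finsupp v" "finsupp w"
  shows "lin_ext (tensor_id_left (braiding m)) (tensor u (tensor v w)) =
    tensor u (tensor w v) + tensor u (tensor (kdelta None) (unital_bracket m v w))"
  using assms
  by (simp add: lin_ext_tensor_id_left finsupp_tensor lin_ext_braiding_tensor tensor_add_right)

lemma braid_relation_pure_tensor:
  fixes m :: "'j \<Rightarrow> 'j \<Rightarrow> 'j \<Rightarrow> 'k::field"
  assumes closed: "\<forall>a\<in>J. \<forall>b\<in>J. m a b \<in> fs_on J"
    and uvw: "u \<in> fs_on (unital_basis J)" "v \<in> fs_on (unital_basis J)" "w \<in> fs_on (unital_basis J)"
    and leibniz: "unital_bracket m (unital_bracket m u v) w =
      unital_bracket m (unital_bracket m u w) v + unital_bracket m u (unital_bracket m v w)"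
  shows "lin_ext (tensor_id_right (braiding m)) (lin_ext (tensor_id_left (braiding m))
           (lin_ext (tensor_id_right (braiding m)) (tensor u (tensor v w)))) =
         lin_ext (tensor_id_left (braiding m)) (lin_ext (tensor_id_right (braiding m))
           (lin_ext (tensor_id_left (braiding m)) (tensor u (tensor v w))))"
proof -
  have fs: "unital_bracket m x y \<in> fs_on (unital_basis J)"
    if "x \<in> fs_on (unital_basis J)" "y \<in> fs_on (unital_basis J)" for x y
    using closed that by (rule fs_on_unital_bracket)
  note fin = uvw fs[OF uvw(1,2)] fs[OF uvw(1,3)] fs[OF uvw(2,3)]
    fs[OF fs[OF uvw(1,2)] uvw(3)] fs[OF fs[OF uvw(1,3)] uvw(2)] fs[OF uvw(1) fs[OF uvw(2,3)]]
  show ?thesis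
    using fin[THEN fs_on_finsupp]
    by (simp add: lin_ext_tensor_id_right_braiding lin_ext_tensor_id_left_braiding lin_ext_add
        finsupp_tensor finsupp_add[simplified] tensor_add_left tensor_add_right
        unital_bracket_add_left unital_bracket_add_right leibniz add_ac)
qed

lemma fs_on_braiding:
  assumes closed: "\<forall>a\<in>J. \<forall>b\<in>J. m a b \<in> fs_on J" and "ij \<in> unital_basis J \<times> unital_basis J"
  shows "braiding m ij \<in> fs_on (unital_basis J \<times> unital_basis J)"
proof -
  obtain p q where ij: "ij = (p, q)" "p \<in> unital_basis J" "q \<in> unital_basis J"
    using assms(2) by auto
  have "braiding m ij =
      tensor (kdelta q) (kdelta p) + tensor (kdelta None) (unital_bracket m (kdelta p) (kdelta q))"
    using lin_ext_braiding_tensor[of "kdelta p" "kdelta q" m] by (simp add: ij tensor_kdelta)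
  also have "\<dots> \<in> fs_on (unital_basis J \<times> unital_basis J)"
    using ij closed by (intro fs_on_add fs_on_tensor fs_on_kdelta fs_on_unital_bracket) auto
  finally show ?thesis .
qed

lemma bij_betw_braiding:
  fixes m :: "'j \<Rightarrow> 'j \<Rightarrow> 'j \<Rightarrow> 'k::field"
  assumes closed: "\<forall>a\<in>J. \<forall>b\<in>J. m a b \<in> fs_on J"
  shows "bij_betw (lin_ext (braiding m))
    (fs_on (unital_basis J \<times> unital_basis J)) (fs_on (unital_basis J \<times> unital_basis J))"
proof -
  let ?V2 = "fs_on (unital_basis J \<times> unital_basis J) :: ('j option \<times> 'j option \<Rightarrow> 'k) set"
  define c where "c F = embed_some (lin_ext (case_prod m) (F \<circ> map_prod Some Some))" for F
  define S where "S H = (H \<circ> prod.swap) - tensor (c (H \<circ> prod.swap)) (kdelta None)" for H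
  have R: "lin_ext (braiding m) F = (F \<circ> prod.swap) + tensor (kdelta None) (c F)" if "finsupp F" for F
    using lin_ext_braiding[OF that] by (simp add: c_def)
  have fs_swap: "F \<circ> prod.swap \<in> ?V2" if "F \<in> ?V2" for F
    using that by (intro fs_on_comp[where F = F]) auto
  have fs_c: "c F \<in> fs_on (unital_basis J)" if "F \<in> ?V2" for F
    unfolding c_def
  proof (intro fs_on_embed_some fs_on_lin_ext)
    show "F \<circ> map_prod Some Some \<in> fs_on (J \<times> J)"
      using that by (intro fs_on_comp[where F = F]) (auto simp: inj_def)
  qed (use closed in auto)
  have fs_R: "lin_ext (braiding m) F \<in> ?V2" if "F \<in> ?V2" for F
    using that fs_on_braiding[OF closed] by (rule fs_on_lin_ext)
  have fs_S: "S H \<in> ?V2" if "H \<in> ?V2" for H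
    unfolding S_def using that by (intro fs_on_diff fs_on_tensor fs_c fs_swap fs_on_kdelta) auto
  have "S (lin_ext (braiding m) F) = F" if "F \<in> ?V2" for F
  proof -
    have swap: "lin_ext (braiding m) F \<circ> prod.swap = F + tensor (c F) (kdelta None)"
      using that by (simp add: R fs_on_finsupp fun_eq_iff mult.commute)
    have "c (F + tensor (c F) (kdelta None)) = c F"
      by (simp add: c_def plus_fun_comp)
    then show ?thesis
      by (simp add: S_def swap)
  qed
  moreover have "lin_ext (braiding m) (S H) = H" if "H \<in> ?V2" for H
  proof -
    have swap: "S H \<circ> prod.swap = H - tensor (kdelta None) (c (H \<circ> prod.swap))"
      by (simp add: S_def fun_eq_iff mult.commute)
    have "c (S H) = c (H \<circ> prod.swap)"
      by (simp add: c_def S_def minus_fun_comp)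
    then show ?thesis
      using fs_S[OF that] by (simp add: R fs_on_finsupp swap)
  qed
  ultimately show ?thesis
    using fs_R fs_S by (intro bij_betw_byWitness[where f' = S]) auto
qed

theorem YBE_solution_braiding:
  assumes "right_leibniz J m"
  shows "YBE_solution (unital_basis J) (braiding m)"
proof -
  have closed: "\<forall>a\<in>J. \<forall>b\<in>J. m a b \<in> fs_on J"
    using assms by (simp add: right_leibniz_def)
  note R = fs_on_braiding[OF closed]
  have "lin_ext (tensor_id_right (braiding m)) (lin_ext (tensor_id_left (braiding m))
          (tensor_id_right (braiding m) i)) =
        lin_ext (tensor_id_left (braiding m)) (lin_ext (tensor_id_right (braiding m))
          (tensor_id_left (braiding m) i))"
    if "i \<in> unital_basis J \<times> unital_basis J \<times> unital_basis J" for i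
  proof -
    obtain p q r where pqr: "i = (p, q, r)"
      by (cases i rule: prod_cases3)
    with that have i: "i = (p, q, r)" "p \<in> unital_basis J" "q \<in> unital_basis J" "r \<in> unital_basis J"
      by auto
    have basis: "tensor (kdelta p) (tensor (kdelta q) (kdelta r)) = kdelta i"
      by (simp add: i tensor_kdelta)
    show ?thesis
      using braid_relation_pure_tensor[OF closed fs_on_kdelta[OF i(2)] fs_on_kdelta[OF i(3)]
          fs_on_kdelta[OF i(4)] unital_bracket_leibniz[OF assms i(2-4)]]
      unfolding basis lin_ext_kdelta .
  qed
  note braid_all =
    braid_relation_from_basis[OF fs_on_tensor_id_right[OF R] fs_on_tensor_id_left[OF R] this]
  show ?thesis
    unfolding YBE_solution_def by (simp add: R bij_betw_braiding[OF closed] braid_all)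
qed

section \<open>The tensor square of a 3-Leibniz algebra\<close>

definition tensor_bracket :: "('b \<Rightarrow> 'b \<Rightarrow> 'b \<Rightarrow> 'b \<Rightarrow> 'k::field)
    \<Rightarrow> 'b \<times> 'b \<Rightarrow> 'b \<times> 'b \<Rightarrow> 'b \<times> 'b \<Rightarrow> 'k" where
  "tensor_bracket br = (\<lambda>(x1, x2) (y1, y2).
     tensor (br x1 y1 y2) (kdelta x2) + tensor (kdelta x1) (br x2 y1 y2))"

lemma tri_ext_eq_lin_ext: "tri_ext br x y z = lin_ext (\<lambda>a. lin_ext (\<lambda>b. lin_ext (br a b) z) y) x"
  by (simp add: tri_ext_def lin_ext_def fun_eq_iff sum_distrib_left mult.assoc)

lemma tri_ext_superset:
  assumes "finite X" "{a. x a \<noteq> 0} \<subseteq> X" "finite Y" "{b. y b \<noteq> 0} \<subseteq> Y"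
    "finite Z" "{c. z c \<noteq> 0} \<subseteq> Z"
  shows "tri_ext br x y z d = (\<Sum>a\<in>X. \<Sum>b\<in>Y. \<Sum>c\<in>Z. x a * y b * z c * br a b c d)"
  unfolding tri_ext_eq_lin_ext lin_ext_superset[OF assms(1,2)] lin_ext_superset[OF assms(3,4)]
    lin_ext_superset[OF assms(5,6)]
  by (simp add: sum_distrib_left mult.assoc)

lemma fs_on_tri_ext:
  assumes "leibniz3 B br" "x \<in> fs_on B" "y \<in> fs_on B" "z \<in> fs_on B"
  shows "tri_ext br x y z \<in> fs_on B"
  unfolding tri_ext_eq_lin_ext using assms unfolding leibniz3_def by (intro fs_on_lin_ext) auto

lemma bracket_tensor_bracket:
  assumes a: "finsupp a" and b: "finsupp b" and c: "finsupp c" and d: "finsupp d"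
  shows "bracket (tensor_bracket br) (tensor a b) (tensor c d) =
    tensor (tri_ext br a c d) b + tensor a (tri_ext br b c d)"
proof (intro ext, clarify)
  fix i j
  let ?A = "{i. a i \<noteq> 0}" and ?B = "{i. b i \<noteq> 0}" and ?C = "{i. c i \<noteq> 0}" and ?D = "{i. d i \<noteq> 0}"
  have "bracket (tensor_bracket br) (tensor a b) (tensor c d) (i, j) =
      (\<Sum>x1\<in>?A. \<Sum>x2\<in>?B. \<Sum>y1\<in>?C. \<Sum>y2\<in>?D.
        a x1 * b x2 * c y1 * d y2 * (br x1 y1 y2 i * kdelta x2 j + kdelta x1 i * br x2 y1 y2 j))"
    using assms supp_tensor[of a b] supp_tensor[of c d]
    by (simp add: bracket_def lin_ext_tensor[of "?A \<times> ?B" _ "?C \<times> ?D"] sum.cartesian_product'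
        tensor_bracket_def mult.assoc)
  also have "\<dots> = (\<Sum>x1\<in>?A. \<Sum>x2\<in>?B. b x2 * kdelta x2 j *
        (\<Sum>y1\<in>?C. \<Sum>y2\<in>?D. a x1 * c y1 * d y2 * br x1 y1 y2 i))
      + (\<Sum>x1\<in>?A. a x1 * kdelta x1 i *
        (\<Sum>x2\<in>?B. \<Sum>y1\<in>?C. \<Sum>y2\<in>?D. b x2 * c y1 * d y2 * br x2 y1 y2 j))"
    by (simp only: distrib_left sum.distrib sum_distrib_left) (simp add: mult_ac)
  also have "\<dots> = (\<Sum>x1\<in>?A. b j * (\<Sum>y1\<in>?C. \<Sum>y2\<in>?D. a x1 * c y1 * d y2 * br x1 y1 y2 i))
      + a i * (\<Sum>x2\<in>?B. \<Sum>y1\<in>?C. \<Sum>y2\<in>?D. b x2 * c y1 * d y2 * br x2 y1 y2 j)"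
    by (simp only: sum_mult_kdelta_mult[OF a order_refl] sum_mult_kdelta_mult[OF b order_refl])
  also have "\<dots> = tri_ext br a c d i * b j + a i * tri_ext br b c d j"
    using assms by (simp add: tri_ext_superset sum_distrib_left sum_distrib_right mult_ac)
  finally show "bracket (tensor_bracket br) (tensor a b) (tensor c d) (i, j) =
      (tensor (tri_ext br a c d) b + tensor a (tri_ext br b c d)) (i, j)"
    by simp
qed

lemma tensor_bracket_leibniz:
  assumes L: "leibniz3 B br"
    and fs: "a \<in> fs_on B" "b \<in> fs_on B" "c \<in> fs_on B" "d \<in> fs_on B" "e \<in> fs_on B" "f \<in> fs_on B"
  shows "bracket (tensor_bracket br) (bracket (tensor_bracket br) (tensor a b) (tensor c d)) (tensor e f) =
    bracket (tensor_bracket br) (bracket (tensor_bracket br) (tensor a b) (tensor e f)) (tensor c d) +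
    bracket (tensor_bracket br) (tensor a b) (bracket (tensor_bracket br) (tensor c d) (tensor e f))"
proof -
  let ?t = "tri_ext br"
  have leibniz: "?t (?t x c d) e f = ?t (?t x e f) c d + ?t x (?t c e f) d + ?t x c (?t d e f)"
    if "x \<in> fs_on B" for x
  proof -
    have "?t (?t x c d) e f = (\<lambda>i. ?t (?t x e f) c d i + ?t x (?t c e f) d i + ?t x c (?t d e f) i)"
      using L that fs unfolding leibniz3_def by blast
    then show ?thesis by (simp add: fun_eq_iff)
  qed
  have "finsupp (?t x y z)" if "x \<in> fs_on B" "y \<in> fs_on B" "z \<in> fs_on B" for x y z
    using fs_on_tri_ext[OF L that] by (rule fs_on_finsupp)
  note fin = fs[THEN fs_on_finsupp] this[OF fs(1,3,4)] this[OF fs(2,3,4)] this[OF fs(1,5,6)]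
    this[OF fs(2,5,6)] this[OF fs(3,5,6)] this[OF fs(4,5,6)]
  show ?thesis
    using fin
    by (simp add: bracket_tensor_bracket bracket_add_left bracket_add_right finsupp_tensor
        leibniz[OF fs(1)] leibniz[OF fs(2)] tensor_add_left tensor_add_right add_ac)
qed

lemma right_leibniz_tensor_bracket:
  assumes L: "leibniz3 B br"
  shows "right_leibniz (B \<times> B) (tensor_bracket br)"
  unfolding right_leibniz_def
proof (intro conjI ballI)
  have br: "br x y z \<in> fs_on B" if "x \<in> B" "y \<in> B" "z \<in> B" for x y z
    using L that by (simp add: leibniz3_def)
  show "tensor_bracket br p q \<in> fs_on (B \<times> B)" if "p \<in> B \<times> B" "q \<in> B \<times> B" for p q
    using that by (auto simp: tensor_bracket_def intro!: fs_on_add fs_on_tensor fs_on_kdelta br)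
  show "bracket (tensor_bracket br) (bracket (tensor_bracket br) (kdelta p) (kdelta q)) (kdelta r) =
      bracket (tensor_bracket br) (bracket (tensor_bracket br) (kdelta p) (kdelta r)) (kdelta q) +
      bracket (tensor_bracket br) (kdelta p) (bracket (tensor_bracket br) (kdelta q) (kdelta r))"
    if in_B: "p \<in> B \<times> B" "q \<in> B \<times> B" "r \<in> B \<times> B" for p q r
  proof -
    obtain x1 x2 y1 y2 z1 z2 where pqr: "p = (x1, x2)" "q = (y1, y2)" "r = (z1, z2)"
      and B: "x1 \<in> B" "x2 \<in> B" "y1 \<in> B" "y2 \<in> B" "z1 \<in> B" "z2 \<in> B"
      using in_B by (cases p; cases q; cases r) auto
    show ?thesis
      using tensor_bracket_leibniz[OF L fs_on_kdelta[OF B(1)] fs_on_kdelta[OF B(2)]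
          fs_on_kdelta[OF B(3)] fs_on_kdelta[OF B(4)] fs_on_kdelta[OF B(5)] fs_on_kdelta[OF B(6)]]
      unfolding tensor_kdelta pqr .
  qed
qed

lemma Rbasis_eq_braiding: "Rbasis br = braiding (tensor_bracket br)"
  by (auto simp: fun_eq_iff Rbasis_def braiding_def tensor_bracket_def embed_some_def kdelta_def
      split: option.split prod.split)

theorem corollary5p7:
  fixes B :: "'b set" and br :: "'b \<Rightarrow> 'b \<Rightarrow> 'b \<Rightarrow> 'b \<Rightarrow> 'k::field"
  assumes "leibniz3 B br"
  shows "YBE_solution (Vbasis B) (Rbasis br)"
proof -
  have "Vbasis B = unital_basis (B \<times> B)"
    by (simp add: Vbasis_def unital_basis_def)
  then show ?thesis
    using YBE_solution_braiding[OF right_leibniz_tensor_bracket[OF assms]]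
    by (simp add: Rbasis_eq_braiding)
qed

end
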